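(* Let $(\sigma_t)_{t\ge0}$ and $(\sigma^{(n)}_t)_{t\ge0}$, $n\in\mathbb{N}$, be families of finite Borel measures on $\mathbb{R}$ with $\sigma_0=\sigma^{(n)}_0=0$ such that $t\mapsto\sigma_t(B)$ and $t\mapsto\sigma^{(n)}_t(B)$ are continuous and non-decreasing for every Borel $B\subset\mathbb{R}$. Let $\Sigma$ (resp. $\Sigma^{(n)}$) be the unique $\sigma$-finite Borel measure on $\mathbb{R}\times[0,+\infty)$ such that $\Sigma(B\times(s,t])=\sigma_t(B)-\sigma_s(B)$ for all Borel $B$ and $0\le s\le t$, and $\Sigma(\mathbb{R}\times[0,t])<\infty$, $\Sigma(\mathbb{R}\times\{t\})=0$ for all $t\ge0$ (resp. the same with $\sigma^{(n)}$). Then $\sigma^{(n)}_t\to\sigma_t$ weakly for every $t\ge0$ if and only if $\Sigma^{(n)}|_{\mathbb{R}\times[0,T]}\to\Sigma|_{\mathbb{R}\times[0,T]}$ weakly for every $T>0$.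
   Context: Weak convergence of finite Borel measures means convergence of integrals of every bounded continuous function. $\Sigma|_{\mathbb{R}\times[0,T]}$ denotes the restriction of $\Sigma$ to $\mathbb{R}\times[0,T]$, a finite measure. *)

theory Defs
  imports "HOL-Analysis.Analysis"
begin

definition weak_conv_finite ::
  "(nat \<Rightarrow> 'a::topological_space measure) \<Rightarrow> 'a measure \<Rightarrow> bool" where
  "weak_conv_finite M M' \<longleftrightarrow>
     (\<forall>f::'a \<Rightarrow> real. continuous_on (space M') f \<and> bounded (f ` space M') \<longrightarrow>
        (\<lambda>n. integral\<^sup>L (M n) f) \<longlonglongrightarrow> integral\<^sup>L M' f)"

definition admissible_family :: "(real \<Rightarrow> real measure) \<Rightarrow> bool" where
  "admissible_family \<sigma> \<longleftrightarrow>
     (\<forall>t\<ge>0. sets (\<sigma> t) = sets borel \<and> finite_measure (\<sigma> t)) \<and>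
     (\<forall>B\<in>sets borel. emeasure (\<sigma> 0) B = 0) \<and>
     (\<forall>B\<in>sets borel. continuous_on {0..} (\<lambda>t. measure (\<sigma> t) B)
                      \<and> mono_on {0..} (\<lambda>t. measure (\<sigma> t) B))"

definition associated_space_time_measure ::
  "(real \<Rightarrow> real measure) \<Rightarrow> (real \<times> real) measure \<Rightarrow> bool" where
  "associated_space_time_measure \<sigma> \<Sigma> \<longleftrightarrow>
     sets \<Sigma> = sets (restrict_space borel (UNIV \<times> {0..})) \<and>
     sigma_finite_measure \<Sigma> \<and>
     (\<forall>B\<in>sets borel. \<forall>s t. 0 \<le> s \<and> s \<le> t \<longrightarrow>
        emeasure \<Sigma> (B \<times> {s<..t}) = emeasure (\<sigma> t) B - emeasure (\<sigma> s) B) \<and>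
     (\<forall>t\<ge>0. emeasure \<Sigma> (UNIV \<times> {0..t}) < \<infinity>) \<and>
     (\<forall>t\<ge>0. emeasure \<Sigma> (UNIV \<times> {t}) = 0)"

end

theory Submission
  imports Defs
begin

text \<open>Projecting \<Sigma> restricted to \<real> \<times> [0,T] onto the space coordinate gives \<sigma>(T), and inserting
the time weight 1{s \<le> b} gives \<sigma>(b). The converse direction is therefore immediate. For the
forward direction, a bounded continuous f on \<real> \<times> [0,T] is replaced by the step function
f(x, t(j)) on the time slabs (t(j-1), t(j)] of a uniform grid; its space-time integral is a finite
combination of \<sigma>(t(j))-integrals of bounded continuous functions of x and so converges. As f is
uniformly continuous only on compact sets, the approximation error is bounded by
\<eta> + 2 M h(x) with h a cutoff vanishing on a large interval; the \<sigma>(T)-integral of this bound is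
small and converges as well.\<close>

abbreviation time_strip :: "(real \<times> real) measure \<Rightarrow> real \<Rightarrow> (real \<times> real) measure" where
  "time_strip \<Sigma> T \<equiv> restrict_space \<Sigma> (UNIV \<times> {0..T})"

section \<open>Space-time measures\<close>

lemma sets_space_time_measure:
  "associated_space_time_measure \<sigma> \<Sigma> \<Longrightarrow> sets \<Sigma> = sets (restrict_space borel (UNIV \<times> {0::real..}))"
  unfolding associated_space_time_measure_def by blast

lemma space_space_time_measure:
  assumes "associated_space_time_measure \<sigma> \<Sigma>"
  shows "space \<Sigma> = UNIV \<times> {0..}"
  using sets_eq_imp_space_eq[OF sets_space_time_measure[OF assms]]
  by (simp add: space_restrict_space)

lemma space_time_strip:
  assumes "associated_space_time_measure \<sigma> \<Sigma>"
  shows "space (time_strip \<Sigma> T) = UNIV \<times> {0..T}"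
  by (auto simp: space_restrict_space space_space_time_measure[OF assms])

lemma borel_in_sets_space_time_measure:
  assumes "associated_space_time_measure \<sigma> \<Sigma>" "A \<in> sets borel" "A \<subseteq> UNIV \<times> {0..}"
  shows "A \<in> sets \<Sigma>"
proof -
  have "(UNIV \<times> {0::real..}) \<inter> space borel \<in> sets (borel :: (real \<times> real) measure)"
    by (simp add: borel_Times)
  then show ?thesis
    using assms sets_restrict_space_iff sets_space_time_measure[OF assms(1)] by blast
qed

lemma strip_in_sets_space_time_measure:
  assumes "associated_space_time_measure \<sigma> \<Sigma>"
  shows "(UNIV \<times> {0..T}) \<inter> space \<Sigma> \<in> sets \<Sigma>"
  unfolding space_space_time_measure[OF assms] Times_Int_Times
  by (rule borel_in_sets_space_time_measure[OF assms]) (auto intro: borel_Times)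

lemma measurable_restrict_space_time_measure:
  assumes "associated_space_time_measure \<sigma> \<Sigma>" "h \<in> borel_measurable borel"
  shows "h \<in> borel_measurable (restrict_space \<Sigma> A)"
proof -
  have "h \<in> borel_measurable (restrict_space borel (UNIV \<times> {0::real..}))"
    using assms(2) by (rule measurable_restrict_space1)
  then have "h \<in> borel_measurable \<Sigma>"
    using measurable_cong_sets sets_space_time_measure[OF assms(1)] by blast
  then show ?thesis by (rule measurable_restrict_space1)
qed

lemma continuous_on_measurable_time_strip:
  assumes "associated_space_time_measure \<sigma> \<Sigma>" "continuous_on (UNIV \<times> {0..T}) f"
  shows "f \<in> borel_measurable (time_strip \<Sigma> T)"
proof -
  have "sets (time_strip \<Sigma> T) =
     sets (restrict_space (restrict_space borel (UNIV \<times> {0::real..})) (UNIV \<times> {0..T}))"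
    using sets_space_time_measure[OF assms(1)] by (rule sets_restrict_space_cong)
  also have "\<dots> = sets (restrict_space borel ((UNIV \<times> {0::real..}) \<inter> (UNIV \<times> {0..T})))"
    by (subst restrict_restrict_space) (auto simp: borel_Times)
  also have "(UNIV \<times> {0::real..}) \<inter> (UNIV \<times> {0..T}) = UNIV \<times> {0..T}" by auto
  finally have "sets (time_strip \<Sigma> T) = sets (restrict_space borel (UNIV \<times> {0..T}))" .
  moreover have "f \<in> borel_measurable (restrict_space borel (UNIV \<times> {0..T}))"
    using assms(2) by (rule borel_measurable_continuous_on_restrict)
  ultimately show ?thesis using measurable_cong_sets by blast
qed

lemma finite_measure_time_strip:
  assumes "associated_space_time_measure \<sigma> \<Sigma>" "0 \<le> T"
  shows "finite_measure (time_strip \<Sigma> T)"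
proof (rule finite_measureI)
  have "emeasure (time_strip \<Sigma> T) (space (time_strip \<Sigma> T)) = emeasure \<Sigma> (UNIV \<times> {0..T})"
    unfolding space_time_strip[OF assms(1)]
    by (rule emeasure_restrict_space[OF strip_in_sets_space_time_measure[OF assms(1)]]) simp
  also have "\<dots> < \<infinity>" using assms unfolding associated_space_time_measure_def by auto
  finally show "emeasure (time_strip \<Sigma> T) (space (time_strip \<Sigma> T)) \<noteq> \<infinity>" by simp
qed

lemma integrable_time_strip_bounded:
  assumes "associated_space_time_measure \<sigma> \<Sigma>" "0 \<le> T"
    and "(g :: real \<times> real \<Rightarrow> real) \<in> borel_measurable (time_strip \<Sigma> T)"
    and "\<And>p. p \<in> UNIV \<times> {0..T} \<Longrightarrow> \<bar>g p\<bar> \<le> C"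
  shows "integrable (time_strip \<Sigma> T) g"
proof (rule finite_measure.integrable_const_bound[where B=C])
  show "finite_measure (time_strip \<Sigma> T)" by (rule finite_measure_time_strip[OF assms(1,2)])
  show "AE x in time_strip \<Sigma> T. norm (g x) \<le> C"
    by (rule AE_I2) (simp add: assms(4) space_time_strip[OF assms(1)])
qed (rule assms(3))

lemma integrable_time_strip_product:
  assumes "associated_space_time_measure \<sigma> \<Sigma>" "0 \<le> T"
    and [measurable]: "\<phi> \<in> borel_measurable borel" "w \<in> borel_measurable borel"
    and "\<And>x. \<bar>\<phi> x\<bar> \<le> C" "\<And>s. \<bar>w s\<bar> \<le> 1"
  shows "integrable (time_strip \<Sigma> T) (\<lambda>p. \<phi> (fst p) * w (snd p) :: real)"
proof (rule integrable_time_strip_bounded[OF assms(1,2)])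
  show "(\<lambda>p. \<phi> (fst p) * w (snd p)) \<in> borel_measurable (time_strip \<Sigma> T)"
    using assms(1) by (rule measurable_restrict_space_time_measure)
      (unfold borel_prod[symmetric], measurable)
  show "\<bar>\<phi> (fst p) * w (snd p)\<bar> \<le> C" for p
    using assms(5,6) abs_ge_zero mult_mono by (fastforce simp: abs_mult)
qed

text \<open>This is where the hypotheses \<open>\<Sigma>(\<real> \<times> {0}) = 0\<close> and \<open>\<sigma>\<^sub>0 = 0\<close> are used.\<close>

lemma emeasure_space_time_rectangle:
  assumes "admissible_family \<sigma>" "associated_space_time_measure \<sigma> \<Sigma>"
    and "B \<in> sets borel" "0 \<le> b"
  shows "emeasure \<Sigma> (B \<times> {0..b}) = emeasure (\<sigma> b) B"
proof -
  have sets: "B \<times> {0} \<in> sets \<Sigma>" "B \<times> {0<..b} \<in> sets \<Sigma>" "UNIV \<times> {0} \<in> sets \<Sigma>"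
    using assms by (auto intro!: borel_in_sets_space_time_measure borel_Times)
  have "emeasure \<Sigma> (B \<times> {0}) \<le> emeasure \<Sigma> (UNIV \<times> {0})"
    using sets by (intro emeasure_mono) auto
  also have "\<dots> = 0" using assms(2) unfolding associated_space_time_measure_def by auto
  finally have null: "emeasure \<Sigma> (B \<times> {0}) = 0" by simp
  have "B \<times> {0..b} = B \<times> {0} \<union> B \<times> {0<..b}" using assms(4) by auto
  moreover have "B \<times> {0} \<inter> B \<times> {0<..b} = {}" by auto
  ultimately have "emeasure \<Sigma> (B \<times> {0..b}) = emeasure \<Sigma> (B \<times> {0}) + emeasure \<Sigma> (B \<times> {0<..b})"
    using plus_emeasure[OF sets(1,2)] by simp
  also have "\<dots> = emeasure (\<sigma> b) B - emeasure (\<sigma> 0) B"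
    using null assms unfolding associated_space_time_measure_def by auto
  also have "emeasure (\<sigma> 0) B = 0" using assms unfolding admissible_family_def by auto
  finally show ?thesis by simp
qed

lemma distr_fst_time_strip:
  assumes "admissible_family \<sigma>" "associated_space_time_measure \<sigma> \<Sigma>" "0 \<le> b"
  shows "distr (time_strip \<Sigma> b) borel fst = \<sigma> b"
proof (rule measure_eqI)
  show "sets (distr (time_strip \<Sigma> b) borel fst) = sets (\<sigma> b)"
    using assms unfolding admissible_family_def by auto
next
  fix A assume "A \<in> sets (distr (time_strip \<Sigma> b) borel fst)"
  then have A: "A \<in> sets borel" by simp
  have "fst \<in> borel_measurable (time_strip \<Sigma> b)"
    using assms(2) by (rule measurable_restrict_space_time_measure) (simp add: borel_prod[symmetric])
  then have "emeasure (distr (time_strip \<Sigma> b) borel fst) A = emeasure (time_strip \<Sigma> b) (A \<times> {0..b})"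
    using A by (simp add: emeasure_distr space_time_strip[OF assms(2)] vimage_fst Times_Int_Times)
  also have "\<dots> = emeasure \<Sigma> (A \<times> {0..b})"
    using strip_in_sets_space_time_measure[OF assms(2)] by (intro emeasure_restrict_space) auto
  also have "\<dots> = emeasure (\<sigma> b) A"
    using emeasure_space_time_rectangle[OF assms(1,2) A assms(3)] .
  finally show "emeasure (distr (time_strip \<Sigma> b) borel fst) A = emeasure (\<sigma> b) A" .
qed

lemma integral_time_strip_fst:
  assumes "admissible_family \<sigma>" "associated_space_time_measure \<sigma> \<Sigma>" "0 \<le> b"
    and "(\<phi> :: real \<Rightarrow> real) \<in> borel_measurable borel"
  shows "integral\<^sup>L (time_strip \<Sigma> b) (\<lambda>p. \<phi> (fst p)) = integral\<^sup>L (\<sigma> b) \<phi>"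
proof -
  have "fst \<in> borel_measurable (time_strip \<Sigma> b)"
    using assms(2) by (rule measurable_restrict_space_time_measure) (simp add: borel_prod[symmetric])
  then show ?thesis
    using integral_distr[OF _ assms(4)] distr_fst_time_strip[OF assms(1-3)] by metis
qed

lemma integral_time_strip_fst_indicator:
  assumes "admissible_family \<sigma>" "associated_space_time_measure \<sigma> \<Sigma>" "0 \<le> b" "b \<le> T"
    and "(\<phi> :: real \<Rightarrow> real) \<in> borel_measurable borel"
  shows "integral\<^sup>L (time_strip \<Sigma> T) (\<lambda>p. \<phi> (fst p) * indicator {..b} (snd p)) = integral\<^sup>L (\<sigma> b) \<phi>"
proof -
  note strip = strip_in_sets_space_time_measure[OF assms(2)]
  have "integral\<^sup>L (time_strip \<Sigma> T) (\<lambda>p. \<phi> (fst p) * indicator {..b} (snd p))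
      = integral\<^sup>L \<Sigma> (\<lambda>p. indicator (UNIV \<times> {0..T}) p *\<^sub>R (\<phi> (fst p) * indicator {..b} (snd p)))"
    by (rule integral_restrict_space[OF strip])
  also have "\<dots> = integral\<^sup>L \<Sigma> (\<lambda>p. indicator (UNIV \<times> {0..b}) p *\<^sub>R \<phi> (fst p))"
    using assms(4) by (intro Bochner_Integration.integral_cong)
      (auto simp: space_space_time_measure[OF assms(2)] indicator_def)
  also have "\<dots> = integral\<^sup>L (time_strip \<Sigma> b) (\<lambda>p. \<phi> (fst p))"
    by (rule integral_restrict_space[OF strip, symmetric])
  finally show ?thesis using integral_time_strip_fst[OF assms(1-3,5)] by simp
qed

lemma space_admissible_family:
  "admissible_family \<sigma> \<Longrightarrow> 0 \<le> t \<Longrightarrow> space (\<sigma> t) = UNIV"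
  unfolding admissible_family_def using sets_eq_imp_space_eq[of "\<sigma> t" borel] by auto

lemma sets_admissible_family:
  "admissible_family \<sigma> \<Longrightarrow> 0 \<le> t \<Longrightarrow> sets (\<sigma> t) = sets borel"
  unfolding admissible_family_def by auto

lemma finite_measure_admissible_family:
  "admissible_family \<sigma> \<Longrightarrow> 0 \<le> t \<Longrightarrow> finite_measure (\<sigma> t)"
  unfolding admissible_family_def by auto

lemma admissible_family_at_zero:
  assumes "admissible_family \<sigma>"
  shows "\<sigma> 0 = null_measure borel"
  by (rule measure_eqI) (use assms in \<open>auto simp: admissible_family_def\<close>)

section \<open>Time grids\<close>

definition grid :: "real \<Rightarrow> nat \<Rightarrow> nat \<Rightarrow> real" where
  "grid T K j = T * real j / real K"

definition grid_weight :: "real \<Rightarrow> nat \<Rightarrow> nat \<Rightarrow> real \<Rightarrow> real" where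
  "grid_weight T K j s =
     indicator {..grid T K j} s - (if j = 0 then 0 else indicator {..grid T K (j - 1)} s)"

lemma grid_mono: "0 \<le> T \<Longrightarrow> i \<le> j \<Longrightarrow> grid T K i \<le> grid T K j"
  unfolding grid_def by (intro divide_right_mono mult_left_mono) auto

lemma grid_in_interval:
  assumes "0 \<le> T" "j \<le> K"
  shows "grid T K j \<in> {0..T}"
proof (cases "K = 0")
  case False
  then have "T * real j / real K \<le> T * real K / real K"
    using assms by (intro divide_right_mono mult_left_mono) auto
  then show ?thesis using False assms(1) by (simp add: grid_def)
qed (use assms in \<open>simp add: grid_def\<close>)

lemma grid_last: "0 < K \<Longrightarrow> grid T K K = T"
  unfolding grid_def by simp

lemma grid_step: "0 < j \<Longrightarrow> grid T K j - grid T K (j - 1) = T / real K"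
  unfolding grid_def by (simp add: of_nat_diff right_diff_distrib diff_divide_distrib)

lemma grid_weight_cases: "0 \<le> T \<Longrightarrow> grid_weight T K j s = 0 \<or> grid_weight T K j s = 1"
  using grid_mono[of T "j - 1" j K] unfolding grid_weight_def by (auto simp: indicator_def)

lemma abs_grid_weight_le_1: "0 \<le> T \<Longrightarrow> \<bar>grid_weight T K j s\<bar> \<le> 1"
  using grid_weight_cases[of T K j s] by auto

lemma grid_weight_measurable [measurable]: "grid_weight T K j \<in> borel_measurable borel"
  unfolding grid_weight_def by measurable

lemma sum_grid_weight: "(\<Sum>j\<le>n. grid_weight T K j s) = indicator {..grid T K n} s"
  by (induction n) (simp_all add: grid_weight_def)

lemma grid_weight_nonzero_near:
  assumes "0 \<le> T" "0 \<le> s" "grid_weight T K j s \<noteq> 0"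
  shows "\<bar>s - grid T K j\<bar> \<le> T / real K"
proof (cases "j = 0")
  case True
  then show ?thesis using assms by (auto simp: grid_weight_def grid_def indicator_def)
next
  case False
  then have "grid T K (j - 1) < s" "s \<le> grid T K j"
    using assms(3) grid_mono[OF assms(1), of "j - 1" j K] by (auto simp: grid_weight_def indicator_def of_bool_def split: if_splits)
  then show ?thesis using grid_step[of j T K] False by auto
qed

lemma grid_step_function_error:
  assumes "0 \<le> T" "0 < K" "s \<in> {0..T}"
    and "\<And>j. j \<le> K \<Longrightarrow> \<bar>s - grid T K j\<bar> \<le> T / real K \<Longrightarrow> \<bar>F - G j\<bar> \<le> E"
  shows "\<bar>F - (\<Sum>j\<le>K. G j * grid_weight T K j s)\<bar> \<le> E"
proof -
  have partition: "(\<Sum>j\<le>K. grid_weight T K j s) = 1"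
    using assms(3) grid_last[OF assms(2), of T] by (simp add: sum_grid_weight indicator_def)
  then have "F - (\<Sum>j\<le>K. G j * grid_weight T K j s) = (\<Sum>j\<le>K. (F - G j) * grid_weight T K j s)"
    by (simp add: sum_distrib_left[symmetric] sum_subtractf left_diff_distrib)
  also have "\<bar>\<dots>\<bar> \<le> (\<Sum>j\<le>K. \<bar>(F - G j) * grid_weight T K j s\<bar>)"
    by (rule sum_abs)
  also have "\<dots> \<le> (\<Sum>j\<le>K. E * grid_weight T K j s)"
  proof (rule sum_mono)
    fix j assume "j \<in> {..K}"
    then show "\<bar>(F - G j) * grid_weight T K j s\<bar> \<le> E * grid_weight T K j s"
      using grid_weight_cases[OF assms(1), of K j s] grid_weight_nonzero_near[OF assms(1), of s K j]
        assms(3,4) by auto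
  qed
  also have "\<dots> = E" using partition by (simp add: sum_distrib_left[symmetric])
  finally show ?thesis .
qed

section \<open>Step approximation of space-time integrals\<close>

lemma continuous_on_time_slice:
  assumes "continuous_on (UNIV \<times> {0..T}) f" "t \<in> {0..T}"
  shows "continuous_on UNIV (\<lambda>x. f (x, t))"
  by (rule continuous_on_compose2[OF assms(1)]) (use assms(2) in \<open>auto intro!: continuous_intros\<close>)

lemma integral_time_strip_grid_weight:
  assumes "admissible_family \<sigma>" "associated_space_time_measure \<sigma> \<Sigma>" "0 \<le> T" "j \<le> K"
    and "\<phi> \<in> borel_measurable borel" "\<And>x. \<bar>\<phi> x\<bar> \<le> C"
  shows "integral\<^sup>L (time_strip \<Sigma> T) (\<lambda>p. \<phi> (fst p) * grid_weight T K j (snd p))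
       = integral\<^sup>L (\<sigma> (grid T K j)) \<phi> - (if j = 0 then 0 else integral\<^sup>L (\<sigma> (grid T K (j - 1))) \<phi>)"
proof -
  have ind: "integral\<^sup>L (time_strip \<Sigma> T) (\<lambda>p. \<phi> (fst p) * indicator {..grid T K i} (snd p))
      = integral\<^sup>L (\<sigma> (grid T K i)) \<phi>" if "i \<le> K" for i
    using grid_in_interval[OF assms(3) that] integral_time_strip_fst_indicator[OF assms(1,2)] assms(5)
    by simp
  have int: "integrable (time_strip \<Sigma> T) (\<lambda>p. \<phi> (fst p) * indicator {..grid T K i} (snd p))" for i
    by (rule integrable_time_strip_product[OF assms(2,3,5) _ assms(6)]) auto
  show ?thesis
    using ind[OF assms(4)] ind[of "j - 1"] assms(4)
    by (cases "j = 0") (simp_all add: grid_weight_def right_diff_distrib Bochner_Integration.integral_diff[OF int int])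
qed

lemma time_strip_grid_approximation:
  fixes f :: "real \<times> real \<Rightarrow> real"
  assumes adm: "admissible_family \<sigma>" and assoc: "associated_space_time_measure \<sigma> \<Sigma>"
    and T: "0 \<le> T" and K: "0 < K"
    and f_cont: "continuous_on (UNIV \<times> {0..T}) f"
    and f_bound: "\<And>p. p \<in> UNIV \<times> {0..T} \<Longrightarrow> \<bar>f p\<bar> \<le> M"
    and e_meas: "e \<in> borel_measurable borel" and e_bound: "\<And>x. \<bar>e x\<bar> \<le> C"
    and oscillation: "\<And>x s j. s \<in> {0..T} \<Longrightarrow> j \<le> K \<Longrightarrow> \<bar>s - grid T K j\<bar> \<le> T / real K \<Longrightarrow>
              \<bar>f (x, s) - f (x, grid T K j)\<bar> \<le> e x"
  shows "\<bar>integral\<^sup>L (time_strip \<Sigma> T) f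
          - (\<Sum>j\<le>K. integral\<^sup>L (time_strip \<Sigma> T) (\<lambda>p. f (fst p, grid T K j) * grid_weight T K j (snd p)))\<bar>
         \<le> integral\<^sup>L (\<sigma> T) e"
proof -
  let ?S = "time_strip \<Sigma> T"
  let ?step = "\<lambda>p. \<Sum>j\<le>K. f (fst p, grid T K j) * grid_weight T K j (snd p)"
  have f_int: "integrable ?S f"
    using f_bound by (intro integrable_time_strip_bounded[OF assoc T]
        continuous_on_measurable_time_strip[OF assoc f_cont])
  have term_int: "integrable ?S (\<lambda>p. f (fst p, grid T K j) * grid_weight T K j (snd p))" if "j \<le> K" for j
    using grid_in_interval[OF T that] f_bound
    by (intro integrable_time_strip_product[where C=M, OF assoc T _ grid_weight_measurable _ abs_grid_weight_le_1[OF T]]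
        borel_measurable_continuous_onI continuous_on_time_slice[OF f_cont]) auto
  have step_int: "integrable ?S ?step"
    using term_int by auto
  have e_int: "integrable ?S (\<lambda>p. e (fst p))"
    using integrable_time_strip_product[OF assoc T e_meas _ e_bound, of "\<lambda>_. 1"] by simp
  have "\<bar>integral\<^sup>L ?S f - (\<Sum>j\<le>K. integral\<^sup>L ?S (\<lambda>p. f (fst p, grid T K j) * grid_weight T K j (snd p)))\<bar>
      = \<bar>integral\<^sup>L ?S (\<lambda>p. f p - ?step p)\<bar>"
    using term_int by (simp add: Bochner_Integration.integral_diff[OF f_int step_int])
  also have "\<dots> \<le> integral\<^sup>L ?S (\<lambda>p. \<bar>f p - ?step p\<bar>)"
    by (rule integral_abs_bound)
  also have "\<dots> \<le> integral\<^sup>L ?S (\<lambda>p. e (fst p))"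
  proof (rule integral_mono[OF integrable_abs[OF Bochner_Integration.integrable_diff[OF f_int step_int]] e_int])
    fix p assume "p \<in> space ?S"
    then obtain x s where "p = (x, s)" "s \<in> {0..T}" using space_time_strip[OF assoc] by auto
    then show "\<bar>f p - ?step p\<bar> \<le> e (fst p)"
      using grid_step_function_error[OF T K] oscillation by simp
  qed
  also have "\<dots> = integral\<^sup>L (\<sigma> T) e"
    by (rule integral_time_strip_fst[OF adm assoc T e_meas])
  finally show ?thesis .
qed

section \<open>Tail cutoff\<close>

definition tail_cutoff :: "real \<Rightarrow> real \<Rightarrow> real" where
  "tail_cutoff R x = min 1 (max 0 (\<bar>x\<bar> - R))"

lemma continuous_on_tail_cutoff: "continuous_on UNIV (tail_cutoff R)"
  unfolding tail_cutoff_def by (intro continuous_intros)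

lemma tail_cutoff_bounds: "0 \<le> tail_cutoff R x" "tail_cutoff R x \<le> 1"
  unfolding tail_cutoff_def by auto

lemma exists_small_tail_error:
  assumes "finite_measure M" "sets M = sets borel" "0 < \<epsilon>"
  shows "\<exists>\<eta>>0. \<exists>R. integral\<^sup>L M (\<lambda>x. \<eta> + C * tail_cutoff R x) < \<epsilon>"
proof -
  let ?e = "\<lambda>k x. inverse (real (Suc k)) + C * tail_cutoff (real k) x"
  have "(\<lambda>k. integral\<^sup>L M (?e k)) \<longlonglongrightarrow> integral\<^sup>L M (\<lambda>x. 0)"
  proof (rule integral_dominated_convergence[where w="\<lambda>x. 1 + \<bar>C\<bar>"])
    show "?e k \<in> borel_measurable M" for k
      unfolding measurable_cong_sets[OF assms(2) refl]
      by (intro borel_measurable_continuous_onI continuous_intros continuous_on_tail_cutoff)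
    show "integrable M (\<lambda>x. 1 + \<bar>C\<bar>)"
      using assms(1) by (rule finite_measure.integrable_const)
    show "AE x in M. (\<lambda>k. ?e k x) \<longlonglongrightarrow> 0"
    proof (rule AE_I2)
      fix x
      have "\<forall>\<^sub>F k in sequentially. C * tail_cutoff (real k) x = 0"
        using eventually_ge_at_top[of "nat \<lceil>\<bar>x\<bar>\<rceil>"]
        by eventually_elim (use real_nat_ceiling_ge[of "\<bar>x\<bar>"] in \<open>auto simp: tail_cutoff_def\<close>)
      then show "(\<lambda>k. ?e k x) \<longlonglongrightarrow> 0"
        by (rule tendsto_add_zero[OF LIMSEQ_inverse_real_of_nat tendsto_eventually])
    qed
    show "AE x in M. norm (?e k x) \<le> 1 + \<bar>C\<bar>" for k
    proof (rule AE_I2)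
      fix x
      have "\<bar>C * tail_cutoff (real k) x\<bar> \<le> \<bar>C\<bar>"
        using tail_cutoff_bounds[of "real k" x] by (simp add: abs_mult mult_left_le)
      moreover have "inverse (real (Suc k)) \<le> 1" by (simp add: inverse_le_1_iff)
      ultimately show "norm (?e k x) \<le> 1 + \<bar>C\<bar>"
        using abs_triangle_ineq[of "inverse (real (Suc k))" "C * tail_cutoff (real k) x"] by simp
    qed
  qed simp
  then have "\<forall>\<^sub>F k in sequentially. integral\<^sup>L M (?e k) < \<epsilon>"
    using order_tendstoD(2) assms(3) by simp
  then obtain k where "integral\<^sup>L M (?e k) < \<epsilon>"
    by (auto simp: eventually_sequentially)
  then show ?thesis by (intro exI[of _ "inverse (real (Suc k))"]) auto
qed

lemma uniform_oscillation_tail_bound: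
  fixes f :: "real \<times> real \<Rightarrow> real"
  assumes f_cont: "continuous_on (UNIV \<times> {0..T}) f"
    and f_bound: "\<And>p. p \<in> UNIV \<times> {0..T} \<Longrightarrow> \<bar>f p\<bar> \<le> M" and "0 < \<eta>"
  shows "\<exists>\<delta>>0. \<forall>x s s'. s \<in> {0..T} \<longrightarrow> s' \<in> {0..T} \<longrightarrow> \<bar>s - s'\<bar> < \<delta> \<longrightarrow>
           \<bar>f (x, s) - f (x, s')\<bar> \<le> \<eta> + 2 * M * tail_cutoff R x"
proof -
  define C where "C = {-(R + 1)..R + 1} \<times> {0..T}"
  have "uniformly_continuous_on C f"
    by (rule compact_uniformly_continuous[OF continuous_on_subset[OF f_cont]])
      (auto simp: C_def intro!: compact_Times)
  then obtain \<delta> where "\<delta> > 0"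
    and \<delta>: "\<And>p q. p \<in> C \<Longrightarrow> q \<in> C \<Longrightarrow> dist q p < \<delta> \<Longrightarrow> dist (f q) (f p) < \<eta>"
    unfolding uniformly_continuous_on_def using \<open>0 < \<eta>\<close> by metis
  have "\<bar>f (x, s) - f (x, s')\<bar> \<le> \<eta> + 2 * M * tail_cutoff R x"
    if s: "s \<in> {0..T}" "s' \<in> {0..T}" "\<bar>s - s'\<bar> < \<delta>" for x s s'
  proof (cases "\<bar>x\<bar> \<le> R + 1")
    case True
    then have "dist (f (x, s)) (f (x, s')) < \<eta>"
      using s by (intro \<delta>) (auto simp: C_def dist_Pair_Pair dist_real_def)
    moreover have "0 \<le> M" using f_bound[of "(x, s)"] s by auto
    then have "0 \<le> 2 * M * tail_cutoff R x" using tail_cutoff_bounds[of R x] by simp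
    ultimately show ?thesis by (simp add: dist_real_def)
  next
    case False
    then have "tail_cutoff R x = 1" by (simp add: tail_cutoff_def)
    then show ?thesis using f_bound[of "(x, s)"] f_bound[of "(x, s')"] s \<open>0 < \<eta>\<close> by auto
  qed
  with \<open>\<delta> > 0\<close> show ?thesis by blast
qed

lemma exists_grid_oscillation_weight:
  fixes f :: "real \<times> real \<Rightarrow> real"
  assumes "finite_measure \<mu>" "sets \<mu> = sets borel" "0 < T"
    and f_cont: "continuous_on (UNIV \<times> {0..T}) f"
    and f_bound: "\<And>p. p \<in> UNIV \<times> {0..T} \<Longrightarrow> \<bar>f p\<bar> \<le> M" and "0 < \<epsilon>"
  obtains K e where "0 < K" "continuous_on UNIV e" "bounded (range e)" "integral\<^sup>L \<mu> e < \<epsilon>"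
    "\<And>x s j. s \<in> {0..T} \<Longrightarrow> j \<le> K \<Longrightarrow> \<bar>s - grid T K j\<bar> \<le> T / real K \<Longrightarrow>
       \<bar>f (x, s) - f (x, grid T K j)\<bar> \<le> e x"
proof -
  obtain \<eta> R where "0 < \<eta>" and small: "integral\<^sup>L \<mu> (\<lambda>x. \<eta> + 2 * M * tail_cutoff R x) < \<epsilon>"
    using exists_small_tail_error[OF assms(1,2) \<open>0 < \<epsilon>\<close>] by blast
  define e where "e = (\<lambda>x. \<eta> + 2 * M * tail_cutoff R x)"
  have e_cont: "continuous_on UNIV e"
    unfolding e_def by (intro continuous_intros continuous_on_tail_cutoff)
  have "\<bar>e x\<bar> \<le> \<eta> + 2 * \<bar>M\<bar>" for x
  proof -
    have "\<bar>2 * M * tail_cutoff R x\<bar> \<le> 2 * \<bar>M\<bar>"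
      using tail_cutoff_bounds[of R x] by (simp add: abs_mult mult_left_le)
    then show ?thesis
      using abs_triangle_ineq[of \<eta> "2 * M * tail_cutoff R x"] \<open>0 < \<eta>\<close> by (simp add: e_def)
  qed
  then have e_bdd: "bounded (range e)"
    by (auto simp: bounded_iff)
  obtain \<delta> where "0 < \<delta>" and oscillation: "\<And>x s s'. s \<in> {0..T} \<Longrightarrow> s' \<in> {0..T} \<Longrightarrow>
      \<bar>s - s'\<bar> < \<delta> \<Longrightarrow> \<bar>f (x, s) - f (x, s')\<bar> \<le> e x"
    using uniform_oscillation_tail_bound[OF f_cont f_bound \<open>0 < \<eta>\<close>, of R] by (auto simp: e_def)
  obtain K :: nat where K: "T / \<delta> < real K" using reals_Archimedean2 by blast
  moreover have "0 < T / \<delta>" using \<open>0 < T\<close> \<open>0 < \<delta>\<close> by simp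
  ultimately have K_pos: "0 < real K" by linarith
  have "T / real K < \<delta>" using K K_pos \<open>0 < \<delta>\<close> by (simp add: field_simps)
  then have "\<bar>f (x, s) - f (x, grid T K j)\<bar> \<le> e x"
    if "s \<in> {0..T}" "j \<le> K" "\<bar>s - grid T K j\<bar> \<le> T / real K" for x s j
    using oscillation[OF that(1) grid_in_interval[OF _ that(2)]] that(3) \<open>0 < T\<close> by simp
  with K_pos e_cont e_bdd small show ?thesis
    by (intro that[of K e]) (simp_all add: e_def)
qed

section \<open>Weak convergence\<close>

lemma tendsto_by_approximation:
  fixes I :: "'a::metric_space"
  assumes "\<And>\<epsilon>. 0 < \<epsilon> \<Longrightarrow> \<exists>J Jn. Jn \<longlonglongrightarrow> J \<and> dist I J \<le> \<epsilon> \<and>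
             (\<forall>\<^sub>F n in sequentially. dist (In n) (Jn n) \<le> \<epsilon>)"
  shows "In \<longlonglongrightarrow> I"
proof (rule tendstoI)
  fix r :: real assume "0 < r"
  then obtain J Jn where lim: "Jn \<longlonglongrightarrow> J" and "dist I J \<le> r / 3"
    and near: "\<forall>\<^sub>F n in sequentially. dist (In n) (Jn n) \<le> r / 3"
    using assms[of "r / 3"] by auto
  have "\<forall>\<^sub>F n in sequentially. dist (Jn n) J < r / 3"
    by (rule tendstoD[OF lim]) (use \<open>0 < r\<close> in simp)
  with near show "\<forall>\<^sub>F n in sequentially. dist (In n) I < r"
  proof eventually_elim
    fix n assume "dist (In n) (Jn n) \<le> r / 3" "dist (Jn n) J < r / 3"
    moreover have "dist (In n) I \<le> dist (In n) (Jn n) + dist (Jn n) J + dist I J"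
      using dist_triangle[of "In n" I "Jn n"] dist_triangle[of "Jn n" I J] by (simp add: dist_commute)
    ultimately show "dist (In n) I < r" using \<open>dist I J \<le> r / 3\<close> by linarith
  qed
qed

lemma weak_conv_finiteD:
  fixes \<phi> :: "'a::topological_space \<Rightarrow> real"
  assumes "weak_conv_finite \<mu> M" "space M = UNIV" "continuous_on UNIV \<phi>" "bounded (range \<phi>)"
  shows "(\<lambda>n. integral\<^sup>L (\<mu> n) \<phi>) \<longlonglongrightarrow> integral\<^sup>L M \<phi>"
  using assms unfolding weak_conv_finite_def by simp

lemma grid_step_integrals_tendsto:
  fixes f :: "real \<times> real \<Rightarrow> real"
  assumes adm: "admissible_family \<sigma>" and adm_n: "\<And>n. admissible_family (\<sigma>n n)"
    and assoc: "associated_space_time_measure \<sigma> \<Sigma>"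
    and assoc_n: "\<And>n. associated_space_time_measure (\<sigma>n n) (\<Sigma>n n)"
    and conv: "\<And>t. 0 \<le> t \<Longrightarrow> weak_conv_finite (\<lambda>n. \<sigma>n n t) (\<sigma> t)"
    and T: "0 \<le> T" and f_cont: "continuous_on (UNIV \<times> {0..T}) f"
    and f_bound: "\<And>p. p \<in> UNIV \<times> {0..T} \<Longrightarrow> \<bar>f p\<bar> \<le> M"
  shows "(\<lambda>n. \<Sum>j\<le>K. integral\<^sup>L (time_strip (\<Sigma>n n) T) (\<lambda>p. f (fst p, grid T K j) * grid_weight T K j (snd p)))
    \<longlonglongrightarrow> (\<Sum>j\<le>K. integral\<^sup>L (time_strip \<Sigma> T) (\<lambda>p. f (fst p, grid T K j) * grid_weight T K j (snd p)))"
proof (rule tendsto_sum)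
  fix j assume "j \<in> {..K}"
  then have j: "j \<le> K" by simp
  let ?\<phi> = "\<lambda>x. f (x, grid T K j)"
  have \<phi>_cont: "continuous_on UNIV ?\<phi>"
    by (rule continuous_on_time_slice[OF f_cont grid_in_interval[OF T j]])
  then have \<phi>_meas: "?\<phi> \<in> borel_measurable borel"
    by (rule borel_measurable_continuous_onI)
  have \<phi>_bound: "\<bar>?\<phi> x\<bar> \<le> M" for x
    using f_bound grid_in_interval[OF T j] by auto
  then have "bounded (range ?\<phi>)"
    by (auto simp: bounded_iff)
  then have slice_conv: "(\<lambda>n. integral\<^sup>L (\<sigma>n n t) ?\<phi>) \<longlonglongrightarrow> integral\<^sup>L (\<sigma> t) ?\<phi>" if "0 \<le> t" for t
    using weak_conv_finiteD[OF conv[OF that] space_admissible_family[OF adm that] \<phi>_cont] by blast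
  have "grid T K j \<ge> 0" "grid T K (j - 1) \<ge> 0"
    using grid_in_interval[OF T j] grid_in_interval[OF T, of "j - 1" K] j by auto
  note lim = this[THEN slice_conv]
  show "(\<lambda>n. integral\<^sup>L (time_strip (\<Sigma>n n) T) (\<lambda>p. ?\<phi> (fst p) * grid_weight T K j (snd p)))
      \<longlonglongrightarrow> integral\<^sup>L (time_strip \<Sigma> T) (\<lambda>p. ?\<phi> (fst p) * grid_weight T K j (snd p))"
    unfolding integral_time_strip_grid_weight[OF adm_n assoc_n T j \<phi>_meas \<phi>_bound]
      integral_time_strip_grid_weight[OF adm assoc T j \<phi>_meas \<phi>_bound]
    using lim by (cases "j = 0") (simp_all add: tendsto_diff)
qed

lemma weak_conv_time_strips_if_weak_conv_slices:
  assumes adm: "admissible_family \<sigma>" and adm_n: "\<And>n. admissible_family (\<sigma>n n)"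
    and assoc: "associated_space_time_measure \<sigma> \<Sigma>"
    and assoc_n: "\<And>n. associated_space_time_measure (\<sigma>n n) (\<Sigma>n n)"
    and conv: "\<And>t. 0 \<le> t \<Longrightarrow> weak_conv_finite (\<lambda>n. \<sigma>n n t) (\<sigma> t)"
    and "0 < T"
  shows "weak_conv_finite (\<lambda>n. time_strip (\<Sigma>n n) T) (time_strip \<Sigma> T)"
  unfolding weak_conv_finite_def space_time_strip[OF assoc]
proof (intro allI impI, elim conjE)
  fix f :: "real \<times> real \<Rightarrow> real"
  assume f_cont: "continuous_on (UNIV \<times> {0..T}) f" and "bounded (f ` (UNIV \<times> {0..T}))"
  then obtain M where f_bound: "\<And>p. p \<in> UNIV \<times> {0..T} \<Longrightarrow> \<bar>f p\<bar> \<le> M"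
    by (auto simp: bounded_iff)
  have T: "0 \<le> T" using \<open>0 < T\<close> by simp
  show "(\<lambda>n. integral\<^sup>L (time_strip (\<Sigma>n n) T) f) \<longlonglongrightarrow> integral\<^sup>L (time_strip \<Sigma> T) f"
  proof (rule tendsto_by_approximation)
    fix \<epsilon> :: real assume "0 < \<epsilon>"
    obtain K e where "0 < K" and e_cont: "continuous_on UNIV e" and "bounded (range e)"
      and small: "integral\<^sup>L (\<sigma> T) e < \<epsilon>"
      and grid_oscillation: "\<And>x s j. s \<in> {0..T} \<Longrightarrow> j \<le> K \<Longrightarrow> \<bar>s - grid T K j\<bar> \<le> T / real K \<Longrightarrow>
            \<bar>f (x, s) - f (x, grid T K j)\<bar> \<le> e x"
      using exists_grid_oscillation_weight[OF finite_measure_admissible_family[OF adm T]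
          sets_admissible_family[OF adm T] \<open>0 < T\<close> f_cont f_bound \<open>0 < \<epsilon>\<close>] by blast
    from \<open>bounded (range e)\<close> obtain C where e_bound: "\<And>x. \<bar>e x\<bar> \<le> C"
      by (auto simp: bounded_iff)
    let ?step = "\<lambda>S. \<Sum>j\<le>K. integral\<^sup>L (time_strip S T) (\<lambda>p. f (fst p, grid T K j) * grid_weight T K j (snd p))"
    have error: "\<bar>integral\<^sup>L (time_strip S T) f - ?step S\<bar> \<le> integral\<^sup>L (\<rho> T) e"
      if "admissible_family \<rho>" "associated_space_time_measure \<rho> S" for \<rho> S
      by (rule time_strip_grid_approximation[OF that T \<open>0 < K\<close> f_cont f_bound
            borel_measurable_continuous_onI[OF e_cont] e_bound grid_oscillation])
    have "(\<lambda>n. integral\<^sup>L (\<sigma>n n T) e) \<longlonglongrightarrow> integral\<^sup>L (\<sigma> T) e"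
      by (rule weak_conv_finiteD[OF conv[OF T] space_admissible_family[OF adm T] e_cont \<open>bounded (range e)\<close>])
    then have "\<forall>\<^sub>F n in sequentially. integral\<^sup>L (\<sigma>n n T) e < \<epsilon>"
      using small by (rule order_tendstoD(2))
    then have "\<forall>\<^sub>F n in sequentially. dist (integral\<^sup>L (time_strip (\<Sigma>n n) T) f) (?step (\<Sigma>n n)) \<le> \<epsilon>"
    proof eventually_elim
      fix n assume "integral\<^sup>L (\<sigma>n n T) e < \<epsilon>"
      then show "dist (integral\<^sup>L (time_strip (\<Sigma>n n) T) f) (?step (\<Sigma>n n)) \<le> \<epsilon>"
        using error[OF adm_n[of n] assoc_n[of n]] by (simp add: dist_real_def)
    qed
    moreover have "dist (integral\<^sup>L (time_strip \<Sigma> T) f) (?step \<Sigma>) \<le> \<epsilon>"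
      using error[OF adm assoc] small by (simp add: dist_real_def)
    moreover have "(\<lambda>n. ?step (\<Sigma>n n)) \<longlonglongrightarrow> ?step \<Sigma>"
      by (rule grid_step_integrals_tendsto[OF adm adm_n assoc assoc_n conv T f_cont f_bound])
    ultimately show "\<exists>J Jn. Jn \<longlonglongrightarrow> J \<and> dist (integral\<^sup>L (time_strip \<Sigma> T) f) J \<le> \<epsilon> \<and>
        (\<forall>\<^sub>F n in sequentially. dist (integral\<^sup>L (time_strip (\<Sigma>n n) T) f) (Jn n) \<le> \<epsilon>)"
      by blast
  qed
qed

lemma weak_conv_slices_if_weak_conv_time_strips:
  assumes adm: "admissible_family \<sigma>" and adm_n: "\<And>n. admissible_family (\<sigma>n n)"
    and assoc: "associated_space_time_measure \<sigma> \<Sigma>"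
    and assoc_n: "\<And>n. associated_space_time_measure (\<sigma>n n) (\<Sigma>n n)"
    and conv: "\<And>T. 0 < T \<Longrightarrow> weak_conv_finite (\<lambda>n. time_strip (\<Sigma>n n) T) (time_strip \<Sigma> T)"
    and t: "0 \<le> t"
  shows "weak_conv_finite (\<lambda>n. \<sigma>n n t) (\<sigma> t)"
  unfolding weak_conv_finite_def space_admissible_family[OF adm t]
proof (intro allI impI, elim conjE)
  fix \<phi> :: "real \<Rightarrow> real"
  assume \<phi>_cont: "continuous_on UNIV \<phi>" and \<phi>_bdd: "bounded (range \<phi>)"
  show "(\<lambda>n. integral\<^sup>L (\<sigma>n n t) \<phi>) \<longlonglongrightarrow> integral\<^sup>L (\<sigma> t) \<phi>"
  proof (cases "t = 0")
    case True
    then show ?thesis using admissible_family_at_zero[OF adm] admissible_family_at_zero[OF adm_n] by simp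
  next
    case False
    have "continuous_on (UNIV \<times> {0..t}) (\<lambda>p. \<phi> (fst p))"
      by (intro continuous_on_compose2[OF \<phi>_cont] continuous_intros) auto
    moreover have "bounded ((\<lambda>p. \<phi> (fst p)) ` (UNIV \<times> {0..t}))"
      by (rule bounded_subset[OF \<phi>_bdd]) auto
    ultimately have "(\<lambda>n. integral\<^sup>L (time_strip (\<Sigma>n n) t) (\<lambda>p. \<phi> (fst p)))
        \<longlonglongrightarrow> integral\<^sup>L (time_strip \<Sigma> t) (\<lambda>p. \<phi> (fst p))"
      using spec[OF conv[of t, unfolded weak_conv_finite_def space_time_strip[OF assoc]],
          of "\<lambda>p. \<phi> (fst p)"] False t by simp
    moreover have "\<phi> \<in> borel_measurable borel"
      using \<phi>_cont by (rule borel_measurable_continuous_onI)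
    ultimately show ?thesis
      by (simp add: integral_time_strip_fst[OF adm assoc t] integral_time_strip_fst[OF adm_n assoc_n t])
  qed
qed

theorem proposition3p9:
  fixes \<sigma> :: "real \<Rightarrow> real measure"
    and \<sigma>n :: "nat \<Rightarrow> real \<Rightarrow> real measure"
    and \<Sigma> :: "(real \<times> real) measure"
    and \<Sigma>n :: "nat \<Rightarrow> (real \<times> real) measure"
  assumes "admissible_family \<sigma>"
    and "\<And>n. admissible_family (\<sigma>n n)"
    and "associated_space_time_measure \<sigma> \<Sigma>"
    and "\<And>n. associated_space_time_measure (\<sigma>n n) (\<Sigma>n n)"
  shows "(\<forall>t\<ge>0. weak_conv_finite (\<lambda>n. \<sigma>n n t) (\<sigma> t)) \<longleftrightarrow>
         (\<forall>T>0. weak_conv_finite (\<lambda>n. restrict_space (\<Sigma>n n) (UNIV \<times> {0..T}))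
                                  (restrict_space \<Sigma> (UNIV \<times> {0..T})))"
proof
  assume "\<forall>t\<ge>0. weak_conv_finite (\<lambda>n. \<sigma>n n t) (\<sigma> t)"
  then show "\<forall>T>0. weak_conv_finite (\<lambda>n. time_strip (\<Sigma>n n) T) (time_strip \<Sigma> T)"
    by (intro allI impI weak_conv_time_strips_if_weak_conv_slices[OF assms]) simp_all
next
  assume "\<forall>T>0. weak_conv_finite (\<lambda>n. time_strip (\<Sigma>n n) T) (time_strip \<Sigma> T)"
  then show "\<forall>t\<ge>0. weak_conv_finite (\<lambda>n. \<sigma>n n t) (\<sigma> t)"
    by (intro allI impI weak_conv_slices_if_weak_conv_time_strips[OF assms]) simp_all
qed

end
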